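(* Let $\lambda$ be a regular uncountable cardinal, let $\mathcal{C}=\langle\mathcal{C}_\alpha\mid\alpha<\lambda\rangle$ be a coherent sequence of length $\lambda$ in which every $\mathcal{C}_\alpha$ is finite, and let $S\subseteq\lambda$ be stationary. Suppose there is a club $F\subseteq\lambda$ such that for every $\alpha\in S\cap\mathrm{acc}(F)$, $F\cap\alpha\subseteq\bigcup\mathcal{C}_\alpha$. Then $\mathcal{C}$ has a thread.
   Context: For a set of ordinals $A$, $\mathrm{acc}(A)$ is the set of $\beta<\sup\{\alpha+1\mid\alpha\in A\}$ with $\beta=\sup(A\cap\beta)$. A coherent sequence of length $\lambda$ is $\mathcal{C}=\langle\mathcal{C}_\alpha\mid\alpha<\lambda\rangle$ where each $\mathcal{C}_\alpha$ is a nonempty set of closed unbounded subsets of $\alpha$ (for successor $\alpha=\beta+1$, $\mathcal{C}_\alpha=\{\{\beta\}\}$), such that for all $\beta<\lambda$, $C\in\mathcal{C}_\beta$ and $\alpha\in\mathrm{acc}(C)$, $C\cap\alpha\in\mathcal{C}_\alpha$. A thread through $\mathcal{C}$ is a club $D\subseteq\lambda$ with $D\cap\alpha\in\mathcal{C}_\alpha$ for all $\alpha\in\mathrm{acc}(D)$. *)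

theory Defs
  imports Main
begin

text \<open>The regular cardinal lambda is represented by a cardinal order relation r
(a well-order of initial order type lambda); the ordinals below lambda are the
elements of Field r, the ordinal alpha (as a set) is Order_Relation.underS r alpha,
and the ordinal lambda (as a set) is Field r.\<close>

definition lt :: "'a rel \<Rightarrow> 'a \<Rightarrow> 'a \<Rightarrow> bool" where
  "lt r x y \<longleftrightarrow> (x, y) \<in> r \<and> x \<noteq> y"

text \<open>sup X = b, for X a set of ordinals below b: every ordinal below b is
exceeded by an element of X (vacuous for b = 0).\<close>
definition sup_is :: "'a rel \<Rightarrow> 'a set \<Rightarrow> 'a \<Rightarrow> bool" where
  "sup_is r X b \<longleftrightarrow> (\<forall>d. lt r d b \<longrightarrow> (\<exists>x\<in>X. lt r d x))"

text \<open>acc(A) as in the paper: b < sup{a+1 | a in A}, i.e. b \<le> some a in A,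
and b = sup(A \<inter> b).\<close>
definition acc :: "'a rel \<Rightarrow> 'a set \<Rightarrow> 'a set" where
  "acc r A = {b \<in> Field r. (\<exists>a\<in>A. (b, a) \<in> r) \<and> sup_is r (A \<inter> underS r b) b}"

text \<open>Closed unbounded subset of the initial segment B (B = Field r for lambda,
B = underS r a for an ordinal a < lambda).\<close>
definition club_in :: "'a rel \<Rightarrow> 'a set \<Rightarrow> 'a set \<Rightarrow> bool" where
  "club_in r B C \<longleftrightarrow> C \<subseteq> B
     \<and> (\<forall>g\<in>B. \<exists>c\<in>C. (g, c) \<in> r)
     \<and> (\<forall>g\<in>B. (C \<inter> underS r g \<noteq> {} \<and> sup_is r (C \<inter> underS r g) g) \<longrightarrow> g \<in> C)"

definition stationary :: "'a rel \<Rightarrow> 'a set \<Rightarrow> bool" where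
  "stationary r S \<longleftrightarrow> S \<subseteq> Field r \<and> (\<forall>C. club_in r (Field r) C \<longrightarrow> S \<inter> C \<noteq> {})"

definition is_succ :: "'a rel \<Rightarrow> 'a \<Rightarrow> 'a \<Rightarrow> bool" where
  "is_succ r a b \<longleftrightarrow> lt r b a \<and> (\<forall>g. lt r b g \<longrightarrow> (a, g) \<in> r)"

definition coherent_seq :: "'a rel \<Rightarrow> ('a \<Rightarrow> 'a set set) \<Rightarrow> bool" where
  "coherent_seq r Cs \<longleftrightarrow>
     (\<forall>a\<in>Field r. Cs a \<noteq> {} \<and> (\<forall>C\<in>Cs a. club_in r (underS r a) C))
   \<and> (\<forall>a\<in>Field r. \<forall>b. is_succ r a b \<longrightarrow> Cs a = {{b}})
   \<and> (\<forall>b\<in>Field r. \<forall>C\<in>Cs b. \<forall>a\<in>acc r C. C \<inter> underS r a \<in> Cs a)"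

definition is_thread :: "'a rel \<Rightarrow> ('a \<Rightarrow> 'a set set) \<Rightarrow> 'a set \<Rightarrow> bool" where
  "is_thread r Cs D \<longleftrightarrow> club_in r (Field r) D
     \<and> (\<forall>a\<in>acc r D. D \<inter> underS r a \<in> Cs a)"

end

theory Submission
  imports Defs
begin

text \<open>
  Write K for the points of S that are limit points of F. Since S is stationary, K is
  unbounded, and by regularity and uncountability so is the part of K where
  \<open>|Cs a| \<le> n\<close>, for some n. Take an ultrafilter U on that part containing all final segments
  and list each \<open>Cs a\<close> as \<open>enum a 0, \<dots>, enum a (n - 1)\<close>.
  If \<open>b < a\<close> is a limit point of F, the finitely many clubs of \<open>Cs a\<close> cover \<open>F \<inter> a\<close>, so one of
  them accumulates at b; hence U chooses an index i, and that choice is the same i for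
  unboundedly many b. For each such b, coherence gives \<open>enum a i \<inter> b \<in> Cs b\<close> for U-almost all a,
  and since \<open>Cs b\<close> is finite U chooses one value \<open>branch b\<close>. Two branches are initial segments
  of one club \<open>enum a i\<close> (any a in both U-large sets), so they cohere and their union is a
  thread.
\<close>

definition limit_point :: "'a rel \<Rightarrow> 'a set \<Rightarrow> 'a \<Rightarrow> bool" where
  "limit_point r X b \<longleftrightarrow> X \<inter> underS r b \<noteq> {} \<and> sup_is r (X \<inter> underS r b) b"

definition limit_points :: "'a rel \<Rightarrow> 'a set \<Rightarrow> 'a set" where
  "limit_points r X = {b \<in> Field r. limit_point r X b}"

definition unbounded :: "'a rel \<Rightarrow> 'a set \<Rightarrow> bool" where
  "unbounded r X \<longleftrightarrow> (\<forall>g\<in>Field r. \<exists>x\<in>X. lt r g x)"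

lemma unbounded_mono: "X \<subseteq> Y \<Longrightarrow> unbounded r X \<Longrightarrow> unbounded r Y"
  unfolding unbounded_def by blast

lemma club_in_closed: "club_in r A C \<Longrightarrow> g \<in> A \<Longrightarrow> limit_point r C g \<Longrightarrow> g \<in> C"
  unfolding club_in_def limit_point_def by blast

lemma club_in_cofinal: "club_in r A C \<Longrightarrow> g \<in> A \<Longrightarrow> \<exists>c\<in>C. (g, c) \<in> r"
  unfolding club_in_def by blast

lemma club_in_subset: "club_in r A C \<Longrightarrow> C \<subseteq> A"
  unfolding club_in_def by blast

lemma limit_point_mono: "X \<subseteq> Y \<Longrightarrow> limit_point r X b \<Longrightarrow> limit_point r Y b"
  unfolding limit_point_def sup_is_def by blast

lemma finite_lessThan_surj:
  assumes "finite A" and "A \<noteq> {}" and "card A \<le> n"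
  shows "\<exists>f. f ` {..<n} = A"
proof -
  obtain m :: nat and f where A: "A = f ` {i. i < m}" and inj: "inj_on f {i. i < m}"
    using finite_imp_nat_seg_image_inj_on[OF assms(1)] by blast
  have "m = card A" using A inj card_image by fastforce
  then have "0 < m" "m \<le> n" using assms by auto
  then have "(\<lambda>i. if i < m then f i else f 0) ` {..<n} = A"
    unfolding A by (auto simp: image_iff)
  then show ?thesis by blast
qed

text \<open>A maximal positive family for \<open>P = unbounded r\<close> serves as the uniform ultrafilter on K.\<close>

definition positive_family :: "('a set \<Rightarrow> bool) \<Rightarrow> 'a set \<Rightarrow> 'a set set \<Rightarrow> bool" where
  "positive_family P K U \<longleftrightarrow> (\<forall>G. finite G \<longrightarrow> G \<subseteq> U \<longrightarrow> P (K \<inter> \<Inter>G))"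

lemma positive_family_maximal:
  assumes "P K"
  shows "\<exists>U. positive_family P K U \<and> (\<forall>V. positive_family P K V \<longrightarrow> U \<subseteq> V \<longrightarrow> V = U)"
proof -
  have "\<Union>\<U> \<in> {U. positive_family P K U}" if \<U>: "\<U> \<in> chains {U. positive_family P K U}" for \<U>
    unfolding mem_Collect_eq positive_family_def
  proof (intro allI impI)
    fix G assume G: "finite G" "G \<subseteq> \<Union>\<U>"
    show "P (K \<inter> \<Inter>G)"
    proof (cases "G = {}")
      case True
      then show ?thesis using assms by simp
    next
      case False
      then have "\<U> \<noteq> {}" using G(2) by blast
      then obtain V where "V \<in> \<U>" "G \<subseteq> V"
        using finite_subset_Union_chain[OF G] \<U> chains_alt_def by blast
      then show ?thesis using \<U> G(1) chainsD2 unfolding positive_family_def by blast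
    qed
  qed
  then show ?thesis using Zorn_Lemma[of "{U. positive_family P K U}"] by blast
qed

lemma maximal_positive_family_ultra:
  assumes mono: "\<And>X Y. X \<subseteq> Y \<Longrightarrow> P X \<Longrightarrow> P Y"
    and partition: "\<And>X Y. P (X \<union> Y) \<Longrightarrow> P X \<or> P Y"
    and positive: "positive_family P K U"
    and maximal: "\<And>V. positive_family P K V \<Longrightarrow> U \<subseteq> V \<Longrightarrow> V = U"
  shows "Y \<in> U \<or> - Y \<in> U"
proof (rule ccontr)
  have small_with: "\<exists>G. finite G \<and> G \<subseteq> U \<and> \<not> P (K \<inter> Z \<inter> \<Inter>G)" if "Z \<notin> U" for Z
  proof -
    have "\<not> positive_family P K (insert Z U)" using maximal that by blast
    then obtain G where G: "finite G" "G \<subseteq> insert Z U" "\<not> P (K \<inter> \<Inter>G)"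
      unfolding positive_family_def by blast
    have "K \<inter> Z \<inter> \<Inter>(G - {Z}) \<subseteq> K \<inter> \<Inter>G" by blast
    then have "\<not> P (K \<inter> Z \<inter> \<Inter>(G - {Z}))" using mono G(3) by blast
    moreover have "finite (G - {Z})" "G - {Z} \<subseteq> U" using G(1,2) by auto
    ultimately show ?thesis by blast
  qed
  assume "\<not> ?thesis"
  then obtain G1 G2 where G1: "finite G1" "G1 \<subseteq> U" "\<not> P (K \<inter> Y \<inter> \<Inter>G1)"
    and G2: "finite G2" "G2 \<subseteq> U" "\<not> P (K \<inter> - Y \<inter> \<Inter>G2)"
    using small_with by meson
  have "P (K \<inter> \<Inter>(G1 \<union> G2))" using positive G1 G2 unfolding positive_family_def by blast
  moreover have "K \<inter> \<Inter>(G1 \<union> G2) \<subseteq> (K \<inter> Y \<inter> \<Inter>G1) \<union> (K \<inter> - Y \<inter> \<Inter>G2)" by blast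
  ultimately show False using mono partition G1(3) G2(3) by blast
qed

lemma positive_family_witness:
  assumes "positive_family P K U" and "\<not> P {}" and "finite G" and "G \<subseteq> U"
  shows "\<exists>a\<in>K. \<forall>X\<in>G. a \<in> X"
proof -
  have "P (K \<inter> \<Inter>G)" using assms(1,3,4) unfolding positive_family_def by blast
  then have "K \<inter> \<Inter>G \<noteq> {}" using assms(2) by metis
  then show ?thesis by blast
qed

lemma positive_family_cover:
  assumes positive: "positive_family P K U" and ultra: "\<And>Y. Y \<in> U \<or> - Y \<in> U"
    and "\<not> P {}" and "Z \<in> U" and "finite A" and cover: "K \<inter> Z \<subseteq> (\<Union>x\<in>A. f x)"
  shows "\<exists>x\<in>A. f x \<in> U"
proof (rule ccontr)
  assume "\<not> ?thesis"
  then have "insert Z ((\<lambda>x. - f x) ` A) \<subseteq> U" using ultra \<open>Z \<in> U\<close> by blast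
  moreover have "finite (insert Z ((\<lambda>x. - f x) ` A))" using \<open>finite A\<close> by blast
  ultimately obtain a where a: "a \<in> K" "\<forall>X\<in>insert Z ((\<lambda>x. - f x) ` A). a \<in> X"
    using positive_family_witness[OF positive \<open>\<not> P {}\<close>] by blast
  then obtain x where "x \<in> A" "a \<in> f x" using cover by auto
  then show False using a(2) by auto
qed

locale well_order_lt =
  fixes r :: "'a rel"
  assumes well_order: "Well_order r"
begin

lemma r_refl: "x \<in> Field r \<Longrightarrow> (x, x) \<in> r"
  using well_order unfolding well_order_on_def linear_order_on_def partial_order_on_def
    preorder_on_def refl_on_def by blast

lemma r_trans: "(x, y) \<in> r \<Longrightarrow> (y, z) \<in> r \<Longrightarrow> (x, z) \<in> r"
  using well_order unfolding well_order_on_def linear_order_on_def partial_order_on_def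
    preorder_on_def by (meson transE)

lemma r_antisym: "(x, y) \<in> r \<Longrightarrow> (y, x) \<in> r \<Longrightarrow> x = y"
  using well_order unfolding well_order_on_def linear_order_on_def partial_order_on_def
    antisym_def by blast

lemma r_total: "x \<in> Field r \<Longrightarrow> y \<in> Field r \<Longrightarrow> (x, y) \<in> r \<or> (y, x) \<in> r"
  using well_order r_refl unfolding well_order_on_def linear_order_on_def total_on_def by metis

lemma underS_iff [simp]: "x \<in> underS r y \<longleftrightarrow> lt r x y"
  unfolding underS_def lt_def by auto

lemma lt_imp_le: "lt r x y \<Longrightarrow> (x, y) \<in> r"
  unfolding lt_def by simp

lemma lt_Field: "lt r x y \<Longrightarrow> x \<in> Field r \<and> y \<in> Field r"
  unfolding lt_def by (auto intro: FieldI1 FieldI2)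

lemma lt_le_trans: "lt r x y \<Longrightarrow> (y, z) \<in> r \<Longrightarrow> lt r x z"
  unfolding lt_def using r_trans r_antisym by blast

lemma le_lt_trans: "(x, y) \<in> r \<Longrightarrow> lt r y z \<Longrightarrow> lt r x z"
  unfolding lt_def using r_trans r_antisym by blast

lemma lt_trans: "lt r x y \<Longrightarrow> lt r y z \<Longrightarrow> lt r x z"
  using lt_le_trans lt_imp_le by blast

lemma not_lt_imp_le: "x \<in> Field r \<Longrightarrow> y \<in> Field r \<Longrightarrow> \<not> lt r x y \<Longrightarrow> (y, x) \<in> r"
  unfolding lt_def using r_total r_refl by blast

lemma lt_imp_not_le: "lt r x y \<Longrightarrow> (y, x) \<notin> r"
  unfolding lt_def using r_antisym by blast

lemma upper_bound_in_pair: "x \<in> Field r \<Longrightarrow> y \<in> Field r \<Longrightarrow> \<exists>m\<in>{x, y}. (x, m) \<in> r \<and> (y, m) \<in> r"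
  using r_total r_refl by blast

lemma underS_mono: "(b, a) \<in> r \<Longrightarrow> underS r b \<subseteq> underS r a"
  using lt_le_trans by auto

lemma limit_point_Int_underS:
  "(b, a) \<in> r \<Longrightarrow> limit_point r (X \<inter> underS r a) b \<longleftrightarrow> limit_point r X b"
  using underS_mono[of b a] unfolding limit_point_def
  by (simp add: Int_assoc Int_absorb1)

lemma bounded_below_if_not_limit_point:
  assumes "lt r z b" and "\<not> limit_point r X b"
  shows "\<exists>d. lt r d b \<and> (\<forall>x\<in>X. lt r x b \<longrightarrow> (x, d) \<in> r)"
proof (cases "X \<inter> underS r b = {}")
  case True
  then have "\<forall>x\<in>X. \<not> lt r x b" by auto
  then show ?thesis using assms(1) by blast
next
  case False
  then obtain d where d: "lt r d b" "\<forall>x\<in>X \<inter> underS r b. \<not> lt r d x"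
    using assms(2) unfolding limit_point_def sup_is_def by blast
  then show ?thesis using not_lt_imp_le lt_Field by auto
qed

lemma limit_point_Un:
  assumes "limit_point r (X \<union> Y) b"
  shows "limit_point r X b \<or> limit_point r Y b"
proof (rule ccontr)
  assume not: "\<not> ?thesis"
  obtain z where z: "lt r z b"
    using assms unfolding limit_point_def by auto
  obtain dX where dX: "lt r dX b" "\<forall>x\<in>X. lt r x b \<longrightarrow> (x, dX) \<in> r"
    using bounded_below_if_not_limit_point[OF z] not by blast
  obtain dY where dY: "lt r dY b" "\<forall>y\<in>Y. lt r y b \<longrightarrow> (y, dY) \<in> r"
    using bounded_below_if_not_limit_point[OF z] not by blast
  obtain m where m: "m \<in> {dX, dY}" "(dX, m) \<in> r" "(dY, m) \<in> r"
    using upper_bound_in_pair lt_Field dX dY by meson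
  then have "lt r m b" using dX dY by blast
  then obtain x where x: "x \<in> (X \<union> Y) \<inter> underS r b" "lt r m x"
    using assms unfolding limit_point_def sup_is_def by blast
  then have "(x, dX) \<in> r \<or> (x, dY) \<in> r" using dX dY by auto
  then have "(x, m) \<in> r" using m(2,3) r_trans by blast
  then show False using x(2) lt_imp_not_le by blast
qed

lemma limit_point_finite_Union:
  assumes "finite \<C>" and "limit_point r (\<Union>\<C>) b"
  shows "\<exists>C\<in>\<C>. limit_point r C b"
  using assms
proof (induction \<C> rule: finite_induct)
  case empty
  then show ?case unfolding limit_point_def by simp
next
  case (insert C \<C>)
  then show ?case using limit_point_Un[of C "\<Union>\<C>" b] by auto
qed

lemma limit_point_of_limit_points:
  assumes "limit_point r (limit_points r X) b"
  shows "limit_point r X b"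
  unfolding limit_point_def sup_is_def
proof (intro conjI allI impI)
  obtain y where y: "y \<in> limit_points r X" "lt r y b"
    using assms unfolding limit_point_def by auto
  then obtain x where "x \<in> X" "lt r x y"
    unfolding limit_points_def limit_point_def by auto
  moreover have "lt r x b" using \<open>lt r x y\<close> y(2) by (rule lt_trans)
  ultimately show "X \<inter> underS r b \<noteq> {}" by auto
next
  fix d assume "lt r d b"
  then obtain y where y: "y \<in> limit_points r X \<inter> underS r b" "lt r d y"
    using assms unfolding limit_point_def sup_is_def by blast
  then obtain x where "x \<in> X \<inter> underS r y" "lt r d x"
    unfolding limit_points_def limit_point_def sup_is_def by blast
  moreover have "lt r x b" if "lt r x y" for x
    using that y(1) lt_trans by simp
  ultimately show "\<exists>x\<in>X \<inter> underS r b. lt r d x" by auto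
qed

lemma limit_point_in_acc:
  assumes "limit_point r X b" and "c \<in> X" and "(b, c) \<in> r"
  shows "b \<in> acc r X"
  using assms FieldI1[of b c r] unfolding acc_def limit_point_def by blast

end

locale regular_uncountable =
  fixes r :: "'a rel"
  assumes card_order: "Card_order r"
    and regular: "regularCard r"
    and uncountable: "(natLeq, r) \<in> ordLess"
begin

sublocale well_order_lt
  using card_order card_order_on_well_order_on by unfold_locales blast

lemma Field_infinite: "infinite (Field r)"
proof -
  have "(r, card_of (Field r)) \<in> ordIso"
    using card_order Card_order_iff_ordIso_card_of by blast
  then have "(natLeq, card_of (Field r)) \<in> ordLeq"
    using uncountable ordLess_imp_ordLeq ordLeq_ordIso_trans by blast
  then show ?thesis using infinite_iff_natLeq_ordLeq by blast
qed

lemma exists_greater: "x \<in> Field r \<Longrightarrow> \<exists>y\<in>Field r. lt r x y"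
  using infinite_Card_order_limit[OF card_order Field_infinite] unfolding lt_def by blast

lemma sequence_bounded:
  assumes "range (f :: nat \<Rightarrow> 'a) \<subseteq> Field r"
  shows "\<exists>a\<in>Field r. \<forall>n. (f n, a) \<in> r"
proof -
  have "\<not> cofinal (range f) r"
  proof
    assume "cofinal (range f) r"
    then have "(card_of (range f), r) \<in> ordIso"
      using regular assms unfolding regularCard_def by blast
    moreover have "(card_of (range f), natLeq) \<in> ordLeq"
      using card_of_image[of f UNIV] card_of_nat ordLeq_ordIso_trans by blast
    ultimately have "(r, natLeq) \<in> ordLeq"
      using ordIso_symmetric ordIso_ordLeq_trans by blast
    then show False using uncountable not_ordLess_ordLeq by blast
  qed
  then obtain a where a: "a \<in> Field r" "\<forall>n. a = f n \<or> (a, f n) \<notin> r"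
    unfolding cofinal_def by blast
  have "(f n, a) \<in> r" for n
  proof -
    have "f n \<in> Field r" using assms by blast
    then show ?thesis using a r_total[of a "f n"] r_refl[of a] by metis
  qed
  then show ?thesis using a(1) by blast
qed

lemma finite_bounded:
  assumes "finite X" and "X \<subseteq> Field r"
  shows "\<exists>m\<in>Field r. \<forall>x\<in>X. (x, m) \<in> r"
  using assms
proof (induction X rule: finite_induct)
  case empty
  have "Field r \<noteq> {}" using Field_infinite by auto
  then show ?case by blast
next
  case (insert x X)
  then obtain m where m: "m \<in> Field r" "\<forall>x\<in>X. (x, m) \<in> r" by auto
  obtain m' where "m' \<in> {x, m}" "(x, m') \<in> r" "(m, m') \<in> r"
    using upper_bound_in_pair[of x m] insert m by auto
  then show ?case using m insert r_trans by blast
qed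

lemma unbounded_UN_nat:
  fixes X :: "nat \<Rightarrow> 'a set"
  assumes "unbounded r (\<Union>n. X n)"
  shows "\<exists>n. unbounded r (X n)"
proof (rule ccontr)
  assume "\<not> ?thesis"
  then have "\<forall>n. \<exists>g\<in>Field r. \<forall>x\<in>X n. \<not> lt r g x"
    unfolding unbounded_def by blast
  then obtain g where g: "\<And>n. g n \<in> Field r" "\<And>n. \<forall>x\<in>X n. \<not> lt r (g n) x"
    by metis
  obtain a where a: "a \<in> Field r" "\<forall>n. (g n, a) \<in> r"
    using sequence_bounded[of g] g(1) by blast
  then obtain n x where "x \<in> X n" "lt r a x"
    using assms unfolding unbounded_def by blast
  then show False using g(2) a(2) le_lt_trans by blast
qed

lemma unbounded_finite_Union:
  assumes "finite \<X>" and "unbounded r (\<Union>\<X>)"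
  shows "\<exists>X\<in>\<X>. unbounded r X"
proof (rule ccontr)
  assume "\<not> ?thesis"
  then have "\<forall>X\<in>\<X>. \<exists>g\<in>Field r. \<forall>x\<in>X. \<not> lt r g x"
    unfolding unbounded_def by blast
  then obtain g where g: "\<And>X. X \<in> \<X> \<Longrightarrow> g X \<in> Field r \<and> (\<forall>x\<in>X. \<not> lt r (g X) x)"
    by metis
  obtain m where m: "m \<in> Field r" "\<forall>X\<in>\<X>. (g X, m) \<in> r"
    using finite_bounded[of "g ` \<X>"] assms(1) g by auto
  then obtain X x where "X \<in> \<X>" "x \<in> X" "lt r m x"
    using assms(2) unfolding unbounded_def by blast
  then show False using g m(2) le_lt_trans by blast
qed

lemma unbounded_Un: "unbounded r (X \<union> Y) \<Longrightarrow> unbounded r X \<or> unbounded r Y"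
  using unbounded_finite_Union[of "{X, Y}"] by auto

lemma increasing_sequence_limit:
  assumes "\<And>n. f n \<in> X" and "\<And>n. lt r (f n) (f (Suc n))"
  shows "\<exists>s\<in>limit_points r X. \<forall>n. lt r (f n) s"
proof -
  have "range f \<subseteq> Field r" using assms(2) lt_Field by blast
  then obtain a where "a \<in> Field r" "\<forall>n. (f n, a) \<in> r"
    using sequence_bounded by blast
  define U where "U = {u \<in> Field r. \<forall>n. (f n, u) \<in> r}"
  obtain s where s: "s \<in> U" "\<And>y. (y, s) \<in> r - Id \<Longrightarrow> y \<notin> U"
    using wfE_min[of "r - Id" a U] well_order \<open>a \<in> Field r\<close> \<open>\<forall>n. (f n, a) \<in> r\<close>
    unfolding U_def well_order_on_def by blast
  have below_s: "lt r (f n) s" for n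
    using assms(2)[of n] s(1) lt_le_trans unfolding U_def by blast
  have "limit_point r X s"
    unfolding limit_point_def sup_is_def
  proof (intro conjI allI impI)
    have "f 0 \<in> X \<inter> underS r s" using below_s assms(1) by simp
    then show "X \<inter> underS r s \<noteq> {}" by blast
  next
    fix d assume d: "lt r d s"
    then have "d \<notin> U" using s(2) unfolding lt_def by blast
    then obtain n where "\<not> (f n, d) \<in> r"
      using lt_Field[OF d] unfolding U_def by blast
    then have "lt r d (f n)" using not_lt_imp_le lt_Field[OF d] \<open>range f \<subseteq> Field r\<close> by blast
    then show "\<exists>x\<in>X \<inter> underS r s. lt r d x" using below_s assms(1) by auto
  qed
  then show ?thesis
    using below_s lt_Field unfolding limit_points_def by blast
qed

lemma limit_points_unbounded:
  assumes "unbounded r X"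
  shows "unbounded r (limit_points r X)"
  unfolding unbounded_def
proof
  fix g assume "g \<in> Field r"
  then obtain f where f: "\<And>n. f n \<in> X \<and> lt r g (f n)" "\<And>n. lt r (f n) (f (Suc n))"
    using dependent_nat_choice[of "\<lambda>_ x. x \<in> X \<and> lt r g x" "\<lambda>_ x y. lt r x y"]
      assms lt_Field lt_trans unfolding unbounded_def by metis
  then obtain s where "s \<in> limit_points r X" "lt r (f 0) s"
    using increasing_sequence_limit[of f X] by blast
  then show "\<exists>s\<in>limit_points r X. lt r g s" using f(1) lt_trans by blast
qed

lemma club_limit_points:
  assumes "unbounded r X"
  shows "club_in r (Field r) (limit_points r X)"
  unfolding club_in_def
proof (intro conjI ballI impI)
  show "limit_points r X \<subseteq> Field r" unfolding limit_points_def by blast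
next
  fix g assume "g \<in> Field r"
  then show "\<exists>c\<in>limit_points r X. (g, c) \<in> r"
    using limit_points_unbounded[OF assms] lt_imp_le unfolding unbounded_def by blast
next
  fix g assume "g \<in> Field r"
    and "limit_points r X \<inter> underS r g \<noteq> {} \<and> sup_is r (limit_points r X \<inter> underS r g) g"
  then show "g \<in> limit_points r X"
    using limit_point_of_limit_points unfolding limit_points_def limit_point_def by blast
qed

lemma club_unbounded:
  assumes "club_in r (Field r) C"
  shows "unbounded r C"
  unfolding unbounded_def
proof
  fix g assume "g \<in> Field r"
  then obtain y where "y \<in> Field r" "lt r g y" using exists_greater by blast
  then obtain c where "c \<in> C" "(y, c) \<in> r" using club_in_cofinal[OF assms] by blast
  then show "\<exists>c\<in>C. lt r g c" using \<open>lt r g y\<close> lt_le_trans by blast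
qed

lemma club_above:
  assumes C: "club_in r (Field r) C" and "g \<in> Field r"
  shows "club_in r (Field r) {c \<in> C. lt r g c}"
  unfolding club_in_def
proof (intro conjI ballI impI)
  show "{c \<in> C. lt r g c} \<subseteq> Field r" using club_in_subset[OF C] by blast
next
  fix h assume "h \<in> Field r"
  then obtain m where "m \<in> {g, h}" "(g, m) \<in> r" "(h, m) \<in> r"
    using upper_bound_in_pair \<open>g \<in> Field r\<close> by blast
  moreover obtain c where "c \<in> C" "lt r m c"
    using club_unbounded[OF C] \<open>m \<in> {g, h}\<close> \<open>g \<in> Field r\<close> \<open>h \<in> Field r\<close>
    unfolding unbounded_def by blast
  ultimately show "\<exists>c\<in>{c \<in> C. lt r g c}. (h, c) \<in> r"
    using le_lt_trans lt_imp_le by blast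
next
  fix h assume h: "h \<in> Field r"
    and lim: "{c \<in> C. lt r g c} \<inter> underS r h \<noteq> {} \<and> sup_is r ({c \<in> C. lt r g c} \<inter> underS r h) h"
  then have "limit_point r C h"
    using limit_point_mono[of "{c \<in> C. lt r g c}" C] unfolding limit_point_def by blast
  then have "h \<in> C" by (rule club_in_closed[OF C h])
  obtain c where "c \<in> {c \<in> C. lt r g c} \<inter> underS r h" using lim by blast
  then have "lt r g c" "lt r c h" by auto
  then have "lt r g h" by (rule lt_trans)
  with \<open>h \<in> C\<close> show "h \<in> {c \<in> C. lt r g c}" by blast
qed

lemma stationary_unbounded:
  assumes "stationary r S" and "club_in r (Field r) C"
  shows "unbounded r (S \<inter> C)"
  unfolding unbounded_def
proof
  fix g assume "g \<in> Field r"
  then have "S \<inter> {c \<in> C. lt r g c} \<noteq> {}"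
    using club_above[OF assms(2)] assms(1) unfolding stationary_def by blast
  then show "\<exists>x\<in>S \<inter> C. lt r g x" by blast
qed


lemma coherent_clubs_Union_restrict:
  assumes E: "E \<subseteq> Field r"
    and clubs: "\<And>b. b \<in> E \<Longrightarrow> club_in r (underS r b) (X b)"
    and coherent: "\<And>b c. b \<in> E \<Longrightarrow> c \<in> E \<Longrightarrow> lt r b c \<Longrightarrow> X c \<inter> underS r b = X b"
    and "c \<in> E"
  shows "(\<Union>b\<in>E. X b) \<inter> underS r c = X c"
proof (intro equalityI subsetI)
  fix y assume "y \<in> (\<Union>b\<in>E. X b) \<inter> underS r c"
  then obtain b where b: "b \<in> E" "y \<in> X b" "lt r y c" by auto
  consider "b = c" | "lt r b c" | "lt r c b"
    using r_total E b(1) \<open>c \<in> E\<close> unfolding lt_def by blast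
  then show "y \<in> X c"
  proof cases
    case 2
    then show ?thesis using coherent[OF b(1) \<open>c \<in> E\<close>] b(2) by blast
  next
    case 3
    have "y \<in> X b \<inter> underS r c" using b by simp
    then show ?thesis using coherent[OF \<open>c \<in> E\<close> b(1) 3] by simp
  qed (use b in simp)
next
  fix y assume "y \<in> X c"
  then show "y \<in> (\<Union>b\<in>E. X b) \<inter> underS r c"
    using club_in_subset[OF clubs[OF \<open>c \<in> E\<close>]] \<open>c \<in> E\<close> by blast
qed

lemma coherent_clubs_Union_club:
  assumes E: "E \<subseteq> Field r" "unbounded r E"
    and clubs: "\<And>b. b \<in> E \<Longrightarrow> club_in r (underS r b) (X b)"
    and coherent: "\<And>b c. b \<in> E \<Longrightarrow> c \<in> E \<Longrightarrow> lt r b c \<Longrightarrow> X c \<inter> underS r b = X b"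
  shows "club_in r (Field r) (\<Union>b\<in>E. X b)"
  unfolding club_in_def
proof (intro conjI ballI impI)
  show "(\<Union>b\<in>E. X b) \<subseteq> Field r"
    using club_in_subset[OF clubs] lt_Field by fastforce
next
  fix g assume "g \<in> Field r"
  then obtain b where "b \<in> E" "lt r g b" using E(2) unfolding unbounded_def by blast
  then show "\<exists>c\<in>\<Union>b\<in>E. X b. (g, c) \<in> r"
    using club_in_cofinal[OF clubs] by fastforce
next
  fix g assume "g \<in> Field r" and lim: "(\<Union>b\<in>E. X b) \<inter> underS r g \<noteq> {}
      \<and> sup_is r ((\<Union>b\<in>E. X b) \<inter> underS r g) g"
  obtain b where b: "b \<in> E" "lt r g b" using E(2) \<open>g \<in> Field r\<close> unfolding unbounded_def by blast
  have "(\<Union>b\<in>E. X b) \<inter> underS r g = X b \<inter> underS r g"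
    using coherent_clubs_Union_restrict[OF E(1) clubs coherent b(1)] underS_mono[OF lt_imp_le[OF b(2)]]
    by blast
  then have "limit_point r (X b) g" using lim unfolding limit_point_def by simp
  then have "g \<in> X b" using club_in_closed[OF clubs[OF b(1)]] b(2) by simp
  then show "g \<in> (\<Union>b\<in>E. X b)" using b(1) by blast
qed

end

locale thread_hypotheses = regular_uncountable +
  fixes Cs :: "'a \<Rightarrow> 'a set set" and S F :: "'a set"
  assumes coherent: "coherent_seq r Cs"
    and finite_Cs: "\<forall>a\<in>Field r. finite (Cs a)"
    and stationary: "stationary r S"
    and club_F: "club_in r (Field r) F"
    and covered: "\<forall>a\<in>S \<inter> acc r F. F \<inter> underS r a \<subseteq> \<Union>(Cs a)"
begin

lemma Cs_nonempty: "a \<in> Field r \<Longrightarrow> Cs a \<noteq> {}"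
  using coherent[unfolded coherent_seq_def, THEN conjunct1] by blast

lemma Cs_club: "a \<in> Field r \<Longrightarrow> C \<in> Cs a \<Longrightarrow> club_in r (underS r a) C"
  using coherent[unfolded coherent_seq_def, THEN conjunct1] by blast

lemma Cs_coherent: "a \<in> Field r \<Longrightarrow> C \<in> Cs a \<Longrightarrow> b \<in> acc r C \<Longrightarrow> C \<inter> underS r b \<in> Cs b"
  using coherent[unfolded coherent_seq_def, THEN conjunct2, THEN conjunct2] by blast

lemma Cs_restrict_limit_point:
  assumes "a \<in> Field r" and "C \<in> Cs a" and "lt r b a" and "limit_point r C b"
  shows "C \<inter> underS r b \<in> Cs b"
proof -
  have "b \<in> C" using club_in_closed[OF Cs_club[OF assms(1,2)]] assms(3,4) by simp
  then have "b \<in> acc r C" using limit_point_in_acc[OF assms(4)] r_refl lt_Field[OF assms(3)] by blast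
  then show ?thesis using Cs_coherent assms(1,2) by blast
qed

lemma limit_points_F_acc: "limit_points r F \<subseteq> acc r F"
proof
  fix b assume b: "b \<in> limit_points r F"
  then obtain c where "c \<in> F" "(b, c) \<in> r"
    using club_in_cofinal[OF club_F] unfolding limit_points_def by blast
  then show "b \<in> acc r F" using limit_point_in_acc b unfolding limit_points_def by blast
qed

lemma limit_point_of_some_Cs:
  assumes a: "a \<in> S \<inter> limit_points r F" and b: "b \<in> limit_points r F" and "lt r b a"
  shows "\<exists>C\<in>Cs a. limit_point r C b"
proof -
  have "limit_point r (F \<inter> underS r a) b"
    using b lt_imp_le[OF \<open>lt r b a\<close>] limit_point_Int_underS unfolding limit_points_def by blast
  moreover have "F \<inter> underS r a \<subseteq> \<Union>(Cs a)" using a covered limit_points_F_acc by blast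
  ultimately have "limit_point r (\<Union>(Cs a)) b" by (rule limit_point_mono[rotated])
  moreover have "finite (Cs a)" using a finite_Cs unfolding limit_points_def by blast
  ultimately show ?thesis using limit_point_finite_Union by blast
qed

lemma limit_points_F_unbounded: "unbounded r (limit_points r F)"
  using limit_points_unbounded club_unbounded club_F by blast

definition level :: "nat \<Rightarrow> 'a set" where
  "level n = {a \<in> S \<inter> limit_points r F. card (Cs a) \<le> n}"

lemma unbounded_level: "\<exists>n. unbounded r (level n)"
proof -
  have "S \<inter> limit_points r F = (\<Union>n. level n)" unfolding level_def by blast
  moreover have "unbounded r (S \<inter> limit_points r F)"
    using stationary_unbounded[OF stationary club_limit_points] club_unbounded club_F by blast
  ultimately show ?thesis using unbounded_UN_nat by metis
qed

end

locale thread_ultrafilter = thread_hypotheses +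
  fixes n :: nat and U :: "'a set set"
  assumes positive: "positive_family (unbounded r) (level n) U"
    and ultra: "\<And>Y. Y \<in> U \<or> - Y \<in> U"
begin

lemma empty_not_unbounded: "\<not> unbounded r {}"
  using Field_infinite unfolding unbounded_def by auto

lemma U_witness: "finite G \<Longrightarrow> G \<subseteq> U \<Longrightarrow> \<exists>a\<in>level n. \<forall>X\<in>G. a \<in> X"
  using positive_family_witness[OF positive empty_not_unbounded] by blast

lemma U_cover:
  "Z \<in> U \<Longrightarrow> finite A \<Longrightarrow> level n \<inter> Z \<subseteq> (\<Union>x\<in>A. f x) \<Longrightarrow> \<exists>x\<in>A. f x \<in> U"
  using positive_family_cover[OF positive ultra empty_not_unbounded] by blast

lemma U_above: "g \<in> Field r \<Longrightarrow> {a. lt r g a} \<in> U"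
proof (rule ccontr)
  assume "g \<in> Field r" and "{a. lt r g a} \<notin> U"
  then have "unbounded r (level n \<inter> \<Inter>{- {a. lt r g a}})"
    using ultra positive unfolding positive_family_def by blast
  then show False using \<open>g \<in> Field r\<close> unfolding unbounded_def by auto
qed

definition enum :: "'a \<Rightarrow> nat \<Rightarrow> 'a set" where
  "enum a = (SOME f. f ` {..<n} = Cs a)"

lemma enum_image:
  assumes "a \<in> level n"
  shows "enum a ` {..<n} = Cs a"
proof -
  have "a \<in> Field r" using assms unfolding level_def limit_points_def by blast
  then have "finite (Cs a)" and "Cs a \<noteq> {}" using finite_Cs Cs_nonempty by auto
  moreover have "card (Cs a) \<le> n" using assms unfolding level_def by blast
  ultimately have "\<exists>f. f ` {..<n} = Cs a" by (rule finite_lessThan_surj)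
  then show ?thesis unfolding enum_def by (rule someI_ex)
qed

definition reflecting :: "'a \<Rightarrow> nat \<Rightarrow> 'a set" where
  "reflecting b i = {a. lt r b a \<and> limit_point r (enum a i) b}"

definition reflection_points :: "nat \<Rightarrow> 'a set" where
  "reflection_points i = {b \<in> limit_points r F. reflecting b i \<in> U}"

lemma exists_reflecting_index:
  assumes b: "b \<in> limit_points r F"
  shows "\<exists>i\<in>{..<n}. reflecting b i \<in> U"
proof (rule U_cover)
  show "{a. lt r b a} \<in> U" using U_above b unfolding limit_points_def by blast
  show "level n \<inter> {a. lt r b a} \<subseteq> (\<Union>i\<in>{..<n}. reflecting b i)"
  proof
    fix a assume a: "a \<in> level n \<inter> {a. lt r b a}"
    then obtain C where "C \<in> Cs a" "limit_point r C b"
      using limit_point_of_some_Cs b unfolding level_def by blast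
    moreover have "C \<in> enum a ` {..<n}" using enum_image a \<open>C \<in> Cs a\<close> by blast
    ultimately obtain j where "j < n" "limit_point r (enum a j) b" by auto
    then show "a \<in> (\<Union>i\<in>{..<n}. reflecting b i)"
      using a unfolding reflecting_def by blast
  qed
qed simp

lemma exists_unbounded_reflection_points: "\<exists>i<n. unbounded r (reflection_points i)"
proof -
  have "limit_points r F \<subseteq> \<Union>(reflection_points ` {..<n})"
    using exists_reflecting_index unfolding reflection_points_def by blast
  then have "unbounded r (\<Union>(reflection_points ` {..<n}))"
    using limit_points_F_unbounded by (rule unbounded_mono)
  then obtain X where "X \<in> reflection_points ` {..<n}" "unbounded r X"
    using unbounded_finite_Union by blast
  then show ?thesis by blast
qed

end

locale thread_branch = thread_ultrafilter +
  fixes i :: nat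
  assumes i_less: "i < n"
    and unbounded_reflection_points: "unbounded r (reflection_points i)"
begin

definition traces_to :: "'a \<Rightarrow> 'a set \<Rightarrow> 'a set" where
  "traces_to b x = {a. enum a i \<inter> underS r b = x}"

definition branch :: "'a \<Rightarrow> 'a set" where
  "branch b = (SOME x. x \<in> Cs b \<and> traces_to b x \<in> U)"

lemma reflection_points_Field: "reflection_points i \<subseteq> Field r"
  unfolding reflection_points_def limit_points_def by blast

lemma branch:
  assumes b: "b \<in> reflection_points i"
  shows "branch b \<in> Cs b" and "traces_to b (branch b) \<in> U"
proof -
  have "\<exists>x\<in>Cs b. traces_to b x \<in> U"
  proof (rule U_cover)
    show "reflecting b i \<in> U" using b unfolding reflection_points_def by blast
    show "finite (Cs b)" using b finite_Cs reflection_points_Field by blast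
    show "level n \<inter> reflecting b i \<subseteq> (\<Union>x\<in>Cs b. traces_to b x)"
    proof
      fix a assume a: "a \<in> level n \<inter> reflecting b i"
      then have "a \<in> Field r" unfolding level_def limit_points_def by blast
      moreover have "enum a i \<in> Cs a" using enum_image a i_less by blast
      ultimately have "enum a i \<inter> underS r b \<in> Cs b"
        using Cs_restrict_limit_point a unfolding reflecting_def by blast
      then show "a \<in> (\<Union>x\<in>Cs b. traces_to b x)" unfolding traces_to_def by blast
    qed
  qed
  then have "\<exists>x. x \<in> Cs b \<and> traces_to b x \<in> U" by blast
  then have "branch b \<in> Cs b \<and> traces_to b (branch b) \<in> U"
    unfolding branch_def by (rule someI_ex)
  then show "branch b \<in> Cs b" and "traces_to b (branch b) \<in> U" by blast+
qed

lemma branch_club: "b \<in> reflection_points i \<Longrightarrow> club_in r (underS r b) (branch b)"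
  using Cs_club branch(1) reflection_points_Field by blast

text \<open>Any a lying in both traces witnesses the coherence: both branches are initial
  segments of the same club \<open>enum a i\<close>.\<close>

lemma branch_coherent:
  assumes b: "b \<in> reflection_points i" and c: "c \<in> reflection_points i" and "lt r b c"
  shows "branch c \<inter> underS r b = branch b"
proof -
  obtain a where "a \<in> traces_to b (branch b)" "a \<in> traces_to c (branch c)"
    using U_witness[of "{traces_to b (branch b), traces_to c (branch c)}"] branch(2) b c by auto
  then have "enum a i \<inter> underS r b = branch b" "enum a i \<inter> underS r c = branch c"
    unfolding traces_to_def by auto
  then show ?thesis using underS_mono[OF lt_imp_le[OF \<open>lt r b c\<close>]] by blast
qed

lemma is_thread_Union_branch: "is_thread r Cs (\<Union>b\<in>reflection_points i. branch b)"
  unfolding is_thread_def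
proof
  let ?D = "\<Union>b\<in>reflection_points i. branch b"
  show "club_in r (Field r) ?D"
    by (rule coherent_clubs_Union_club[OF reflection_points_Field unbounded_reflection_points
          branch_club branch_coherent])
  show "\<forall>a\<in>acc r ?D. ?D \<inter> underS r a \<in> Cs a"
  proof
    fix a assume a: "a \<in> acc r ?D"
    then have "a \<in> Field r" unfolding acc_def by blast
    then obtain b where b: "b \<in> reflection_points i" "lt r a b"
      using unbounded_reflection_points unfolding unbounded_def by blast
    have restrict: "?D \<inter> underS r a = branch b \<inter> underS r a"
      using coherent_clubs_Union_restrict[OF reflection_points_Field branch_club branch_coherent b(1)]
        underS_mono[OF lt_imp_le[OF b(2)]]
      by blast
    obtain c where "c \<in> branch b" "(a, c) \<in> r"
      using club_in_cofinal[OF branch_club[OF b(1)]] b(2) by auto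
    then have "a \<in> acc r (branch b)"
      using a restrict \<open>a \<in> Field r\<close> unfolding acc_def by auto
    then show "?D \<inter> underS r a \<in> Cs a"
      using Cs_coherent branch(1)[OF b(1)] reflection_points_Field b(1) restrict by auto
  qed
qed

end

theorem lemma2p8:
  fixes r :: "'a rel" and Cs :: "'a \<Rightarrow> 'a set set" and S F :: "'a set"
  assumes "Card_order r" and "regularCard r" and "(natLeq, r) \<in> ordLess"
    and "coherent_seq r Cs"
    and "\<forall>a\<in>Field r. finite (Cs a)"
    and "stationary r S"
    and "club_in r (Field r) F"
    and "\<forall>a\<in>S \<inter> acc r F. F \<inter> underS r a \<subseteq> \<Union>(Cs a)"
  shows "\<exists>D. is_thread r Cs D"
proof -
  interpret thread_hypotheses r Cs S F
    using assms by unfold_locales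
  obtain n where n: "unbounded r (level n)"
    using unbounded_level by blast
  obtain U where U: "positive_family (unbounded r) (level n) U"
    and maximal: "\<And>V. positive_family (unbounded r) (level n) V \<Longrightarrow> U \<subseteq> V \<Longrightarrow> V = U"
    using positive_family_maximal[of "unbounded r" "level n"] n by blast
  have "Y \<in> U \<or> - Y \<in> U" for Y
    using maximal_positive_family_ultra[OF unbounded_mono unbounded_Un U maximal] .
  then interpret thread_ultrafilter r Cs S F n U
    using U by unfold_locales
  obtain i where "i < n" "unbounded r (reflection_points i)"
    using exists_unbounded_reflection_points by blast
  then interpret thread_branch r Cs S F n U i
    by unfold_locales
  show ?thesis using is_thread_Union_branch by blast
qed

end
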